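(* For every integer $\Delta \geq 2$ there is a connected graph $G$ with $\Delta(G) = \Delta$ such that $c_V(G) = 2(\Delta-1)$ and $c_E(G) = \Delta$.
   Context: $\Delta(G)$ is the maximum degree. In all games the players alternate turns, cops first; initially the cop player places all cops, then the robber player places the robber on a vertex (several pieces may share a position). In a turn each piece of the moving player may stay or make one move (no obligation to move). The robber always sits on vertices and moves to an adjacent vertex; $v_r$ denotes his current vertex. Vertex version: cops on vertices moving to adjacent vertices; cops win when every neighbor of $v_r$ is occupied by a cop; $c_V(G)$ is the least number of cops that can force a win in finitely many turns. Edge version: cops sit on edges; a cop on edge $e$ may move to any edge sharing an endpoint with $e$; cops win when every edge incident to $v_r$ is occupied; the corresponding number is $c_E(G)$. *)

theory Defs
  imports Main
begin

definition simple_graph :: "nat set \<Rightarrow> nat set set \<Rightarrow> bool" where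
  "simple_graph V Es \<longleftrightarrow> finite V \<and> (\<forall>e\<in>Es. e \<subseteq> V \<and> card e = 2)"

definition adj :: "nat set set \<Rightarrow> nat \<Rightarrow> nat \<Rightarrow> bool" where
  "adj Es u v \<longleftrightarrow> {u, v} \<in> Es"

definition connected_graph :: "nat set \<Rightarrow> nat set set \<Rightarrow> bool" where
  "connected_graph V Es \<longleftrightarrow> simple_graph V Es \<and> V \<noteq> {} \<and>
     (\<forall>u\<in>V. \<forall>v\<in>V. (u, v) \<in> {(x, y). adj Es x y}\<^sup>*)"

definition degree :: "nat set set \<Rightarrow> nat \<Rightarrow> nat" where
  "degree Es v = card {e \<in> Es. v \<in> e}"

definition max_degree :: "nat set \<Rightarrow> nat set set \<Rightarrow> nat" where
  "max_degree V Es = Max (degree Es ` V)"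

definition v_surrounded :: "nat set set \<Rightarrow> nat list \<Rightarrow> nat \<Rightarrow> bool" where
  "v_surrounded Es C r \<longleftrightarrow> (\<forall>u. adj Es r u \<longrightarrow> u \<in> set C)"

definition v_cop_move :: "nat set set \<Rightarrow> nat list \<Rightarrow> nat list \<Rightarrow> bool" where
  "v_cop_move Es C C' \<longleftrightarrow> list_all2 (\<lambda>c c'. c' = c \<or> adj Es c c') C C'"

(* v_cwin Es C r: robber (at r) is to move, cops at C; cops can force a win
   in finitely many turns *)
inductive v_cwin :: "nat set set \<Rightarrow> nat list \<Rightarrow> nat \<Rightarrow> bool" for Es where
  won: "v_surrounded Es C r \<Longrightarrow> v_cwin Es C r"
| step: "(\<forall>r'. (r' = r \<or> adj Es r r') \<longrightarrow> (\<exists>C'. v_cop_move Es C C' \<and> v_cwin Es C' r'))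
         \<Longrightarrow> v_cwin Es C r"

(* k cops: cops place, robber places, then cops move first *)
definition v_cops_win :: "nat set \<Rightarrow> nat set set \<Rightarrow> nat \<Rightarrow> bool" where
  "v_cops_win V Es k \<longleftrightarrow> (\<exists>C. length C = k \<and> set C \<subseteq> V \<and>
     (\<forall>r\<in>V. \<exists>C'. v_cop_move Es C C' \<and> v_cwin Es C' r))"

definition c_V :: "nat set \<Rightarrow> nat set set \<Rightarrow> nat" where
  "c_V V Es = (LEAST k. v_cops_win V Es k)"

definition e_surrounded :: "nat set set \<Rightarrow> nat set list \<Rightarrow> nat \<Rightarrow> bool" where
  "e_surrounded Es C r \<longleftrightarrow> (\<forall>e\<in>Es. r \<in> e \<longrightarrow> e \<in> set C)"

definition e_cop_move :: "nat set set \<Rightarrow> nat set list \<Rightarrow> nat set list \<Rightarrow> bool" where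
  "e_cop_move Es C C' \<longleftrightarrow> list_all2 (\<lambda>e e'. e' = e \<or> (e' \<in> Es \<and> e \<inter> e' \<noteq> {})) C C'"

inductive e_cwin :: "nat set set \<Rightarrow> nat set list \<Rightarrow> nat \<Rightarrow> bool" for Es where
  won: "e_surrounded Es C r \<Longrightarrow> e_cwin Es C r"
| step: "(\<forall>r'. (r' = r \<or> adj Es r r') \<longrightarrow> (\<exists>C'. e_cop_move Es C C' \<and> e_cwin Es C' r'))
         \<Longrightarrow> e_cwin Es C r"

definition e_cops_win :: "nat set \<Rightarrow> nat set set \<Rightarrow> nat \<Rightarrow> bool" where
  "e_cops_win V Es k \<longleftrightarrow> (\<exists>C. length C = k \<and> set C \<subseteq> Es \<and>
     (\<forall>r\<in>V. \<exists>C'. e_cop_move Es C C' \<and> e_cwin Es C' r))"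

definition c_E :: "nat set \<Rightarrow> nat set set \<Rightarrow> nat" where
  "c_E V Es = (LEAST k. e_cops_win V Es k)"

end

theory Submission
  imports Defs
begin

(* The witness is the double star: two adjacent centres 0 and 1, each carrying \<Delta> - 1 pendant
   leaves.

   Edge game: a robber who never moves at a centre is caught only when all \<Delta> edges there are
   occupied, so at least \<Delta> cops are needed; conversely \<Delta> cops on the central edge reach
   every edge in one move and surround any vertex at once.

   Vertex game: to surround a centre after one move, each of its \<Delta> - 1 leaves must be entered
   from the centre or from the leaf itself, so \<Delta> - 1 cops must stand on that centre or its
   leaves beforehand.  These regions are disjoint for the two centres, so fewer than 2(\<Delta> - 1)
   cops cannot threaten both centres, and the robber, who can always reach either centre, keeps
   stepping to the safe one.  With \<Delta> - 1 cops on each centre the cops win in one move. *)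

lemma list_all2_replicate_left:
  "list_all2 P (replicate n a) ys \<longleftrightarrow> length ys = n \<and> (\<forall>y\<in>set ys. P a y)"
  by (auto simp: list_all2_conv_all_nth in_set_conv_nth dest: nth_mem)

lemma length_filter_add_le:
  assumes "\<And>x. P x \<Longrightarrow> \<not> Q x"
  shows "length (filter P xs) + length (filter Q xs) \<le> length xs"
  using assms by (induction xs) auto

lemma adj_commute: "adj Es u v \<longleftrightarrow> adj Es v u"
  unfolding adj_def by (simp add: insert_commute)

lemma degree_eq_card_neighbours:
  assumes "simple_graph V Es"
  shows "degree Es v = card {u. adj Es v u}"
proof -
  have "{e \<in> Es. v \<in> e} = (\<lambda>u. {v, u}) ` {u. adj Es v u}"
  proof (intro equalityI subsetI)
    fix e assume e: "e \<in> {e \<in> Es. v \<in> e}"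
    then obtain x y where "e = {x, y}" "x \<noteq> y"
      using assms unfolding simple_graph_def by (auto simp: card_2_iff)
    with e show "e \<in> (\<lambda>u. {v, u}) ` {u. adj Es v u}"
      unfolding adj_def by (auto simp: insert_commute)
  qed (auto simp: adj_def)
  moreover have "inj (\<lambda>u. {v, u})"
    by (auto intro: injI simp: doubleton_eq_iff)
  ultimately show ?thesis
    unfolding degree_def by (simp add: card_image inj_on_subset)
qed

lemma v_cop_move_length: "v_cop_move Es C C' \<Longrightarrow> length C' = length C"
  unfolding v_cop_move_def by (simp add: list_all2_lengthD)

lemma e_cop_move_length: "e_cop_move Es C C' \<Longrightarrow> length C' = length C"
  unfolding e_cop_move_def by (simp add: list_all2_lengthD)

lemma v_cop_move_refl: "v_cop_move Es C C"
  unfolding v_cop_move_def by (simp add: list_all2_refl)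

lemma v_surrounded_iff: "v_surrounded Es C r \<longleftrightarrow> {u. adj Es r u} \<subseteq> set C"
  unfolding v_surrounded_def by blast

lemma card_cops_after_move_le:
  assumes "v_cop_move Es C C'"
    and nearby: "\<And>u a. a \<in> A \<Longrightarrow> u = a \<or> adj Es u a \<Longrightarrow> u \<in> N"
  shows "card (A \<inter> set C') \<le> length (filter (\<lambda>c. c \<in> N) C)"
  using assms(1) unfolding v_cop_move_def
proof (induction rule: list_all2_induct)
  case Nil
  then show ?case by simp
next
  case (Cons c C c' C')
  show ?case
  proof (cases "c' \<in> A")
    case True
    then have "c \<in> N"
      using Cons.hyps(1) nearby by blast
    moreover have "card (A \<inter> set (c' # C')) \<le> Suc (card (A \<inter> set C'))"
      using True by (simp add: Int_insert_right card_insert_if)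
    ultimately show ?thesis using Cons.IH by simp
  next
    case False
    then show ?thesis using Cons.IH by simp
  qed
qed

lemma card_pendants_le_cops_nearby:
  assumes "v_cop_move Es C C'" "v_surrounded Es C' c"
    and "L \<subseteq> {u. adj Es c u}" and pendant: "\<And>l u. l \<in> L \<Longrightarrow> adj Es u l \<Longrightarrow> u = c"
  shows "card L \<le> length (filter (\<lambda>x. x \<in> insert c L) C)"
proof -
  have "L \<inter> set C' = L"
    using assms(2,3) unfolding v_surrounded_def by blast
  moreover have "card (L \<inter> set C') \<le> length (filter (\<lambda>x. x \<in> insert c L) C)"
    using assms(1) by (rule card_cops_after_move_le) (auto dest: pendant)
  ultimately show ?thesis by simp
qed

lemma v_cwin_on_refuge_imp_surrounded:
  assumes clique: "\<And>r r'. r \<in> R \<Longrightarrow> r' \<in> R \<Longrightarrow> r' = r \<or> adj Es r r'"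
    and escape: "\<And>C. length C = k \<Longrightarrow> \<exists>r\<in>R. \<forall>C'. v_cop_move Es C C' \<longrightarrow> \<not> v_surrounded Es C' r"
  shows "v_cwin Es C r \<Longrightarrow> r \<in> R \<Longrightarrow> length C = k \<Longrightarrow> v_surrounded Es C r"
proof (induction rule: v_cwin.induct)
  case (won C r)
  then show ?case by simp
next
  case (step r C)
  obtain r' where "r' \<in> R" and safe: "\<forall>C'. v_cop_move Es C C' \<longrightarrow> \<not> v_surrounded Es C' r'"
    using escape step.prems(2) by blast
  then have "r' = r \<or> adj Es r r'"
    using clique step.prems(1) by blast
  with step.IH obtain C' where move: "v_cop_move Es C C'"
    and IH: "r' \<in> R \<Longrightarrow> length C' = k \<Longrightarrow> v_surrounded Es C' r'"
    by blast
  have "length C' = k"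
    using move step.prems(2) by (simp add: v_cop_move_length)
  with IH \<open>r' \<in> R\<close> move safe show ?case
    by blast
qed

lemma not_v_cops_win_of_refuge:
  assumes "R \<subseteq> V"
    and clique: "\<And>r r'. r \<in> R \<Longrightarrow> r' \<in> R \<Longrightarrow> r' = r \<or> adj Es r r'"
    and escape: "\<And>C. length C = k \<Longrightarrow> \<exists>r\<in>R. \<forall>C'. v_cop_move Es C C' \<longrightarrow> \<not> v_surrounded Es C' r"
  shows "\<not> v_cops_win V Es k"
proof
  assume "v_cops_win V Es k"
  then obtain C where C: "length C = k" "\<forall>r\<in>V. \<exists>C'. v_cop_move Es C C' \<and> v_cwin Es C' r"
    unfolding v_cops_win_def by blast
  obtain r where "r \<in> R" and safe: "\<forall>C'. v_cop_move Es C C' \<longrightarrow> \<not> v_surrounded Es C' r"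
    using escape C(1) by blast
  then obtain C' where move: "v_cop_move Es C C'" and "v_cwin Es C' r"
    using C(2) assms(1) by blast
  moreover have "length C' = k"
    using move C(1) by (simp add: v_cop_move_length)
  ultimately have "v_surrounded Es C' r"
    using v_cwin_on_refuge_imp_surrounded[OF clique escape] \<open>r \<in> R\<close> by blast
  with move safe show False
    by blast
qed

lemma e_cwin_degree_le: "e_cwin Es C r \<Longrightarrow> degree Es r \<le> length C"
proof (induction rule: e_cwin.induct)
  case (won C r)
  then have "{e \<in> Es. r \<in> e} \<subseteq> set C"
    unfolding e_surrounded_def by blast
  then have "degree Es r \<le> card (set C)"
    unfolding degree_def by (simp add: card_mono)
  also have "\<dots> \<le> length C" by (rule card_length)
  finally show ?case .
next
  case (step r C)
  then obtain C' where "e_cop_move Es C C'" "degree Es r \<le> length C'"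
    by blast
  then show ?case by (simp add: e_cop_move_length)
qed

lemma e_cops_win_degree_le:
  assumes "e_cops_win V Es k" "r \<in> V"
  shows "degree Es r \<le> k"
proof -
  obtain C where "length C = k" and "\<forall>r\<in>V. \<exists>C'. e_cop_move Es C C' \<and> e_cwin Es C' r"
    using assms(1) unfolding e_cops_win_def by blast
  then obtain C' where "e_cop_move Es C C'" "e_cwin Es C' r"
    using assms(2) by blast
  then show ?thesis
    using e_cwin_degree_le[of Es C' r] \<open>length C = k\<close> by (simp add: e_cop_move_length)
qed

lemma e_cops_win_of_central_edge:
  assumes "finite Es" "e0 \<in> Es" and meets: "\<And>e. e \<in> Es \<Longrightarrow> e0 \<inter> e \<noteq> {}"
    and deg: "\<And>r. r \<in> V \<Longrightarrow> degree Es r \<le> k"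
  shows "e_cops_win V Es k"
proof -
  have "\<exists>C'. e_cop_move Es (replicate k e0) C' \<and> e_cwin Es C' r" if "r \<in> V" for r
  proof -
    obtain xs where xs: "set xs = {e \<in> Es. r \<in> e}" "distinct xs"
      using finite_distinct_list[of "{e \<in> Es. r \<in> e}"] \<open>finite Es\<close> by auto
    have "length xs \<le> k"
      using deg[OF that] distinct_card[OF xs(2)] xs(1) by (simp add: degree_def)
    then have "e_cop_move Es (replicate k e0) (xs @ replicate (k - length xs) e0)"
      unfolding e_cop_move_def list_all2_replicate_left using xs(1) meets by auto
    moreover have "e_surrounded Es (xs @ replicate (k - length xs) e0) r"
      unfolding e_surrounded_def using xs(1) by auto
    ultimately show ?thesis
      by (blast intro: e_cwin.won)
  qed
  then show ?thesis
    unfolding e_cops_win_def using \<open>e0 \<in> Es\<close> by (intro exI[of _ "replicate k e0"]) auto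
qed

lemma c_E_eq_max_degree:
  assumes "simple_graph V Es" "V \<noteq> {}" "e0 \<in> Es" "\<And>e. e \<in> Es \<Longrightarrow> e0 \<inter> e \<noteq> {}"
  shows "c_E V Es = max_degree V Es"
  unfolding c_E_def
proof (rule Least_equality)
  have "finite V" "Es \<subseteq> Pow V"
    using assms(1) unfolding simple_graph_def by auto
  then have "finite Es"
    by (meson finite_Pow_iff finite_subset)
  have "degree Es r \<le> max_degree V Es" if "r \<in> V" for r
    unfolding max_degree_def using \<open>finite V\<close> that by (intro Max_ge) auto
  with \<open>finite Es\<close> assms(3,4) show "e_cops_win V Es (max_degree V Es)"
    by (rule e_cops_win_of_central_edge)
  have "max_degree V Es \<in> degree Es ` V"
    unfolding max_degree_def using \<open>finite V\<close> \<open>V \<noteq> {}\<close> by (intro Max_in) auto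
  then show "max_degree V Es \<le> k" if "e_cops_win V Es k" for k
    using e_cops_win_degree_le[OF that] by auto
qed

definition leaves0 :: "nat \<Rightarrow> nat set" where
  "leaves0 D = {2..D}"

definition leaves1 :: "nat \<Rightarrow> nat set" where
  "leaves1 D = {D+1..<2*D}"

definition double_star_vertices :: "nat \<Rightarrow> nat set" where
  "double_star_vertices D = {0..<2*D}"

definition double_star_edges :: "nat \<Rightarrow> nat set set" where
  "double_star_edges D = insert {0, 1} ((\<lambda>i. {0, i}) ` leaves0 D \<union> (\<lambda>i. {1, i}) ` leaves1 D)"

lemma leaves_disjoint: "0 \<notin> leaves0 D" "1 \<notin> leaves0 D" "0 \<notin> leaves1 D" "1 \<notin> leaves1 D"
  "leaves0 D \<inter> leaves1 D = {}"
  unfolding leaves0_def leaves1_def by auto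

lemma finite_leaves: "finite (leaves0 D)" "finite (leaves1 D)"
  unfolding leaves0_def leaves1_def by simp_all

lemma card_leaves: "card (leaves0 D) = D - 1" "card (leaves1 D) = D - 1"
  unfolding leaves0_def leaves1_def by simp_all

lemma double_star_vertices_eq:
  "D \<ge> 1 \<Longrightarrow> double_star_vertices D = {0, 1} \<union> leaves0 D \<union> leaves1 D"
  unfolding double_star_vertices_def leaves0_def leaves1_def by auto

lemma adj_double_star:
  "adj (double_star_edges D) x y \<longleftrightarrow>
     {x, y} = {0, 1} \<or> (x = 0 \<and> y \<in> leaves0 D) \<or> (y = 0 \<and> x \<in> leaves0 D)
     \<or> (x = 1 \<and> y \<in> leaves1 D) \<or> (y = 1 \<and> x \<in> leaves1 D)"
proof -
  have "adj (double_star_edges D) x y \<longleftrightarrow> {x, y} = {0, 1}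
      \<or> (\<exists>i\<in>leaves0 D. {x, y} = {0, i}) \<or> (\<exists>i\<in>leaves1 D. {x, y} = {1, i})"
    by (simp only: adj_def double_star_edges_def insert_iff Un_iff image_iff)
  then show ?thesis
    unfolding doubleton_eq_iff[of x y 0] doubleton_eq_iff[of x y 1] by auto
qed

lemma neighbours_double_star:
  "{u. adj (double_star_edges D) 0 u} = insert 1 (leaves0 D)"
  "{u. adj (double_star_edges D) 1 u} = insert 0 (leaves1 D)"
  "l \<in> leaves0 D \<Longrightarrow> {u. adj (double_star_edges D) l u} = {0}"
  "l \<in> leaves1 D \<Longrightarrow> {u. adj (double_star_edges D) l u} = {1}"
  using leaves_disjoint[of D] by (auto simp: adj_double_star doubleton_eq_iff)

lemma adj_leaf_double_star:
  "l \<in> leaves0 D \<Longrightarrow> adj (double_star_edges D) u l \<longleftrightarrow> u = 0"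
  "l \<in> leaves1 D \<Longrightarrow> adj (double_star_edges D) u l \<longleftrightarrow> u = 1"
  using leaves_disjoint[of D] by (auto simp: adj_double_star doubleton_eq_iff)

lemma simple_graph_double_star:
  assumes "D \<ge> 1"
  shows "simple_graph (double_star_vertices D) (double_star_edges D)"
proof -
  have "e \<subseteq> double_star_vertices D \<and> card e = 2" if "e \<in> double_star_edges D" for e
    using that double_star_vertices_eq[OF assms]
    unfolding double_star_edges_def by (auto simp: leaves0_def leaves1_def)
  then show ?thesis
    unfolding simple_graph_def double_star_vertices_def by blast
qed

lemma double_star_vertex_cases:
  assumes "D \<ge> 1" "v \<in> double_star_vertices D"
  obtains "v = 0" | "v = 1" | "v \<in> leaves0 D" | "v \<in> leaves1 D"
proof -
  have "v \<in> {0, 1} \<union> leaves0 D \<union> leaves1 D"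
    using assms double_star_vertices_eq by simp
  then show thesis
    using that by blast
qed

lemma connected_double_star:
  assumes "D \<ge> 1"
  shows "connected_graph (double_star_vertices D) (double_star_edges D)"
proof -
  let ?R = "{(x, y). adj (double_star_edges D) x y}"
  have "sym ?R"
    by (rule symI) (simp add: adj_commute)
  have "(1, 0) \<in> ?R"
    by (simp add: adj_double_star doubleton_eq_iff)
  have to_0: "(v, 0) \<in> ?R\<^sup>*" if "v \<in> double_star_vertices D" for v
    using assms that
  proof (cases rule: double_star_vertex_cases)
    case 1
    then show ?thesis by simp
  next
    case 2
    then show ?thesis using r_into_rtrancl[OF \<open>(1, 0) \<in> ?R\<close>] by simp
  next
    case 3
    then have "(v, 0) \<in> ?R" by (simp add: adj_double_star)
    then show ?thesis by (rule r_into_rtrancl)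
  next
    case 4
    then have "(v, 1) \<in> ?R" by (simp add: adj_double_star)
    then show ?thesis
      by (rule converse_rtrancl_into_rtrancl[OF _ r_into_rtrancl[OF \<open>(1, 0) \<in> ?R\<close>]])
  qed
  have "(u, v) \<in> ?R\<^sup>*" if "u \<in> double_star_vertices D" "v \<in> double_star_vertices D" for u v
    using to_0[OF that(1)] symD[OF sym_rtrancl[OF \<open>sym ?R\<close>] to_0[OF that(2)]]
    by (rule rtrancl_trans)
  moreover have "double_star_vertices D \<noteq> {}"
    using assms by (simp add: double_star_vertices_def)
  ultimately show ?thesis
    unfolding connected_graph_def using simple_graph_double_star[OF assms] by blast
qed

lemma max_degree_double_star:
  assumes "D \<ge> 1"
  shows "max_degree (double_star_vertices D) (double_star_edges D) = D"
  unfolding max_degree_def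
proof (rule Max_eqI)
  note deg = degree_eq_card_neighbours[OF simple_graph_double_star[OF assms]]
  have deg0: "degree (double_star_edges D) 0 = D" and deg1: "degree (double_star_edges D) 1 = D"
    unfolding deg neighbours_double_star
    using assms leaves_disjoint[of D] card_leaves[of D] finite_leaves[of D] by simp_all
  show "finite (degree (double_star_edges D) ` double_star_vertices D)"
    by (simp add: double_star_vertices_def)
  show "D \<in> degree (double_star_edges D) ` double_star_vertices D"
    using assms by (intro image_eqI[where x = 0]) (simp_all add: deg0 double_star_vertices_def)
  fix d assume "d \<in> degree (double_star_edges D) ` double_star_vertices D"
  then obtain v where v: "v \<in> double_star_vertices D" and d: "d = degree (double_star_edges D) v"
    by blast
  from assms v show "d \<le> D"
    by (cases rule: double_star_vertex_cases) (use d deg0 deg1 assms in \<open>simp_all add: deg neighbours_double_star\<close>)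
qed

lemma double_star_centre_escapes:
  assumes "length C < 2 * (D - 1)"
  shows "\<exists>r\<in>{0, 1}. \<forall>C'. v_cop_move (double_star_edges D) C C' \<longrightarrow>
           \<not> v_surrounded (double_star_edges D) C' r"
proof (rule ccontr)
  assume "\<not> ?thesis"
  then obtain C0 C1
    where move0: "v_cop_move (double_star_edges D) C C0" "v_surrounded (double_star_edges D) C0 0"
      and move1: "v_cop_move (double_star_edges D) C C1" "v_surrounded (double_star_edges D) C1 1"
    by blast
  have "card (leaves0 D) \<le> length (filter (\<lambda>x. x \<in> insert 0 (leaves0 D)) C)"
    using move0 by (rule card_pendants_le_cops_nearby)
      (unfold neighbours_double_star, simp_all add: adj_leaf_double_star subset_insertI)
  moreover have "card (leaves1 D) \<le> length (filter (\<lambda>x. x \<in> insert 1 (leaves1 D)) C)"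
    using move1 by (rule card_pendants_le_cops_nearby)
      (unfold neighbours_double_star, simp_all add: adj_leaf_double_star subset_insertI)
  moreover have "length (filter (\<lambda>x. x \<in> insert 0 (leaves0 D)) C)
      + length (filter (\<lambda>x. x \<in> insert 1 (leaves1 D)) C) \<le> length C"
    by (rule length_filter_add_le) (use leaves_disjoint[of D] in auto)
  ultimately show False
    using assms card_leaves[of D] by simp
qed

lemma double_star_not_v_cops_win:
  assumes "k < 2 * (D - 1)"
  shows "\<not> v_cops_win (double_star_vertices D) (double_star_edges D) k"
proof (rule not_v_cops_win_of_refuge)
  show "{0, 1} \<subseteq> double_star_vertices D"
    using assms by (auto simp: double_star_vertices_def)
  show "r' = r \<or> adj (double_star_edges D) r r'" if "r \<in> {0, 1}" "r' \<in> {0, 1}" for r r'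
    using that by (auto simp: adj_double_star insert_commute)
qed (use assms double_star_centre_escapes in auto)

lemma double_star_v_cops_win:
  assumes "D \<ge> 2"
  shows "v_cops_win (double_star_vertices D) (double_star_edges D) (2 * (D - 1))"
proof -
  define C where "C = replicate (D - 1) 0 @ replicate (D - 1) (1 :: nat)"
  have "\<exists>C'. v_cop_move (double_star_edges D) C C' \<and> {u. adj (double_star_edges D) r u} \<subseteq> set C'"
    if "r \<in> double_star_vertices D" for r
  proof -
    from assms have "D \<ge> 1" by simp
    from this that show ?thesis
    proof (cases rule: double_star_vertex_cases)
      case 1
      have "v_cop_move (double_star_edges D) C ([2..<D+1] @ replicate (D - 1) 1)"
        unfolding v_cop_move_def C_def
        by (rule list_all2_appendI) (auto simp: list_all2_replicate_left adj_double_star leaves0_def)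
      moreover have "{u. adj (double_star_edges D) 0 u} \<subseteq> set ([2..<D+1] @ replicate (D - 1) 1)"
        unfolding neighbours_double_star using assms by (auto simp: leaves0_def)
      ultimately show ?thesis using 1 by blast
    next
      case 2
      have "v_cop_move (double_star_edges D) C (replicate (D - 1) 0 @ [D+1..<2*D])"
        unfolding v_cop_move_def C_def
        by (rule list_all2_appendI) (auto simp: list_all2_replicate_left adj_double_star leaves1_def)
      moreover have "{u. adj (double_star_edges D) 1 u} \<subseteq> set (replicate (D - 1) 0 @ [D+1..<2*D])"
        unfolding neighbours_double_star using assms by (auto simp: leaves1_def)
      ultimately show ?thesis using 2 by blast
    next
      case 3
      have "0 \<in> set C"
        using assms by (simp add: C_def)
      with 3 have "{u. adj (double_star_edges D) r u} \<subseteq> set C"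
        by (simp add: neighbours_double_star)
      with v_cop_move_refl show ?thesis by blast
    next
      case 4
      have "1 \<in> set C"
        using assms by (simp add: C_def)
      with 4 have "{u. adj (double_star_edges D) r u} \<subseteq> set C"
        by (simp add: neighbours_double_star)
      with v_cop_move_refl show ?thesis by blast
    qed
  qed
  then have "\<exists>C'. v_cop_move (double_star_edges D) C C' \<and> v_cwin (double_star_edges D) C' r"
    if "r \<in> double_star_vertices D" for r
    using that by (metis v_cwin.won v_surrounded_iff)
  moreover have "length C = 2 * (D - 1)" "set C \<subseteq> double_star_vertices D"
    using assms by (auto simp: C_def double_star_vertices_def)
  ultimately show ?thesis
    unfolding v_cops_win_def by blast
qed

lemma c_E_double_star:
  assumes "D \<ge> 1"
  shows "c_E (double_star_vertices D) (double_star_edges D) = D"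
proof -
  have "simple_graph (double_star_vertices D) (double_star_edges D)"
    and "double_star_vertices D \<noteq> {}"
    using connected_double_star[OF assms] unfolding connected_graph_def by blast+
  moreover have "{0, 1} \<in> double_star_edges D"
    by (simp add: double_star_edges_def)
  moreover have "{0, 1} \<inter> e \<noteq> {}" if "e \<in> double_star_edges D" for e
    using that unfolding double_star_edges_def by auto
  ultimately have "c_E (double_star_vertices D) (double_star_edges D)
      = max_degree (double_star_vertices D) (double_star_edges D)"
    by (rule c_E_eq_max_degree)
  then show ?thesis
    using max_degree_double_star[OF assms] by simp
qed

lemma c_V_double_star:
  assumes "D \<ge> 2"
  shows "c_V (double_star_vertices D) (double_star_edges D) = 2 * (D - 1)"
  unfolding c_V_def
proof (rule Least_equality)
  show "v_cops_win (double_star_vertices D) (double_star_edges D) (2 * (D - 1))"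
    using assms by (rule double_star_v_cops_win)
  show "2 * (D - 1) \<le> k" if "v_cops_win (double_star_vertices D) (double_star_edges D) k" for k
    using that double_star_not_v_cops_win by (meson not_less)
qed

theorem corollary2:
  fixes \<Delta> :: nat
  assumes "\<Delta> \<ge> 2"
  shows "\<exists>(V :: nat set) (Es :: nat set set).
           connected_graph V Es \<and> max_degree V Es = \<Delta> \<and>
           c_V V Es = 2 * (\<Delta> - 1) \<and> c_E V Es = \<Delta>"
proof (intro exI conjI)
  from assms have "\<Delta> \<ge> 1" by simp
  show "connected_graph (double_star_vertices \<Delta>) (double_star_edges \<Delta>)"
    using \<open>\<Delta> \<ge> 1\<close> by (rule connected_double_star)
  show "max_degree (double_star_vertices \<Delta>) (double_star_edges \<Delta>) = \<Delta>"
    using \<open>\<Delta> \<ge> 1\<close> by (rule max_degree_double_star)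
  show "c_V (double_star_vertices \<Delta>) (double_star_edges \<Delta>) = 2 * (\<Delta> - 1)"
    using assms by (rule c_V_double_star)
  show "c_E (double_star_vertices \<Delta>) (double_star_edges \<Delta>) = \<Delta>"
    using \<open>\<Delta> \<ge> 1\<close> by (rule c_E_double_star)
qed

end
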